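(* Let $k\ge 2$ and let $P$ be a finite poset excluding $\mathbf{k}+\mathbf{k}$, of height $h$. If every convex subposet $Q$ of $P$ of height at most $4k-4$ satisfies $\dim(Q)\le d_1$, then $\dim(P)\le (h+1)d_1$.
   Context: $\mathbf{k}+\mathbf{k}$ is the disjoint union of two $k$-element chains with all points of one incomparable to all points of the other; $P$ excludes it if no subposet is isomorphic to it. A subposet $Q$ is convex if $x,z\in Q$ and $x<y<z$ imply $y\in Q$. $\dim$ denotes the Dushnik–Miller dimension. *)

theory Defs
  imports Main
begin

definition poset_on :: "'a set \<Rightarrow> ('a \<Rightarrow> 'a \<Rightarrow> bool) \<Rightarrow> bool" where
  "poset_on X le \<longleftrightarrow>
     (\<forall>x\<in>X. le x x) \<and>
     (\<forall>x\<in>X. \<forall>y\<in>X. le x y \<and> le y x \<longrightarrow> x = y) \<and>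
     (\<forall>x\<in>X. \<forall>y\<in>X. \<forall>z\<in>X. le x y \<and> le y z \<longrightarrow> le x z)"

definition chain_in :: "'a set \<Rightarrow> ('a \<Rightarrow> 'a \<Rightarrow> bool) \<Rightarrow> bool" where
  "chain_in C le \<longleftrightarrow> (\<forall>x\<in>C. \<forall>y\<in>C. le x y \<or> le y x)"

definition height :: "'a set \<Rightarrow> ('a \<Rightarrow> 'a \<Rightarrow> bool) \<Rightarrow> nat" where
  "height X le = Max {card C | C. C \<subseteq> X \<and> chain_in C le}"

definition incomparable :: "('a \<Rightarrow> 'a \<Rightarrow> bool) \<Rightarrow> 'a \<Rightarrow> 'a \<Rightarrow> bool" where
  "incomparable le x y \<longleftrightarrow> \<not> le x y \<and> \<not> le y x"

definition excludes_kk :: "'a set \<Rightarrow> ('a \<Rightarrow> 'a \<Rightarrow> bool) \<Rightarrow> nat \<Rightarrow> bool" where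
  "excludes_kk X le k \<longleftrightarrow>
     \<not> (\<exists>C D. C \<subseteq> X \<and> D \<subseteq> X \<and> card C = k \<and> card D = k \<and> C \<inter> D = {} \<and>
              chain_in C le \<and> chain_in D le \<and> (\<forall>x\<in>C. \<forall>y\<in>D. incomparable le x y))"

definition convex_in :: "'a set \<Rightarrow> ('a \<Rightarrow> 'a \<Rightarrow> bool) \<Rightarrow> 'a set \<Rightarrow> bool" where
  "convex_in X le Q \<longleftrightarrow> Q \<subseteq> X \<and>
     (\<forall>x\<in>Q. \<forall>z\<in>Q. \<forall>y\<in>X. le x y \<and> le y z \<longrightarrow> y \<in> Q)"

definition linear_extension :: "'a set \<Rightarrow> ('a \<Rightarrow> 'a \<Rightarrow> bool) \<Rightarrow> ('a \<Rightarrow> 'a \<Rightarrow> bool) \<Rightarrow> bool" where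
  "linear_extension X le L \<longleftrightarrow> poset_on X L \<and> (\<forall>x\<in>X. \<forall>y\<in>X. L x y \<or> L y x) \<and>
     (\<forall>x\<in>X. \<forall>y\<in>X. le x y \<longrightarrow> L x y)"

definition realizer :: "'a set \<Rightarrow> ('a \<Rightarrow> 'a \<Rightarrow> bool) \<Rightarrow> nat \<Rightarrow> (nat \<Rightarrow> 'a \<Rightarrow> 'a \<Rightarrow> bool) \<Rightarrow> bool" where
  "realizer X le t L \<longleftrightarrow> (\<forall>i<t. linear_extension X le (L i)) \<and>
     (\<forall>x\<in>X. \<forall>y\<in>X. le x y \<longleftrightarrow> (\<forall>i<t. L i x y))"

definition dim :: "'a set \<Rightarrow> ('a \<Rightarrow> 'a \<Rightarrow> bool) \<Rightarrow> nat" where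
  "dim X le = (LEAST t. 1 \<le> t \<and> (\<exists>L. realizer X le t L))"

end

theory Submission
  imports Defs
begin

text \<open>Let \<open>\<rho> x\<close> and \<open>\<delta> x\<close> be the sizes of longest chains ending and starting at \<open>x\<close>, so that
  \<open>\<rho> b + \<delta> a \<le> h + 1\<close> whenever \<open>b \<le> a\<close>. If \<open>x\<close> and \<open>y\<close> are incomparable then
  \<open>\<rho> y + \<delta> x \<le> h + 2k - 2\<close>, for otherwise \<open>k\<close>-chains just below \<open>y\<close> and just above \<open>x\<close> would
  form a copy of \<open>k + k\<close>. Hence every incomparable pair lies in one of the \<open>h + 1\<close> convex bands
  \<open>{x. \<delta> x \<le> h + 1 - i \<and> \<rho> x \<le> i + 2k - 3}\<close>, and again by the exclusion of \<open>k + k\<close> each band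
  has height at most \<open>4k - 4\<close>. Extending realizers of the bands to linear extensions of the whole
  poset and concatenating them yields a realizer with \<open>(h + 1) d\<^sub>1\<close> linear orders.\<close>

section \<open>Chains and height\<close>

lemma finite_chain_cards: "finite X \<Longrightarrow> finite {card C | C. C \<subseteq> X \<and> chain_in C le}"
  by (rule finite_subset[of _ "card ` Pow X"]) auto

lemma card_le_height: "finite X \<Longrightarrow> C \<subseteq> X \<Longrightarrow> chain_in C le \<Longrightarrow> card C \<le> height X le"
  unfolding height_def by (rule Max_ge[OF finite_chain_cards]) blast+

lemma height_attained:
  assumes "finite X"
  obtains C where "C \<subseteq> X" "chain_in C le" "card C = height X le"
proof -
  have "chain_in {} le" by (simp add: chain_in_def)
  then have "{card C | C. C \<subseteq> X \<and> chain_in C le} \<noteq> {}" by blast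
  from Max_in[OF finite_chain_cards[OF assms] this] show ?thesis
    using that unfolding height_def by auto
qed

lemma height_leI:
  assumes "finite X" "\<And>C. C \<subseteq> X \<Longrightarrow> chain_in C le \<Longrightarrow> card C \<le> n"
  shows "height X le \<le> n"
proof -
  obtain C where "C \<subseteq> X" "chain_in C le" "card C = height X le"
    using height_attained[OF assms(1)] .
  then show ?thesis using assms(2) by metis
qed

lemma chain_in_converse: "chain_in C (\<lambda>x y. le y x) = chain_in C le"
  unfolding chain_in_def by auto

lemma height_converse: "height X (\<lambda>x y. le y x) = height X le"
  unfolding height_def chain_in_converse[of _ le] ..

lemma chain_in_subset: "chain_in C le \<Longrightarrow> D \<subseteq> C \<Longrightarrow> chain_in D le"
  unfolding chain_in_def by blast

section \<open>Rank and corank\<close>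

definition rank :: "'a set \<Rightarrow> ('a \<Rightarrow> 'a \<Rightarrow> bool) \<Rightarrow> 'a \<Rightarrow> nat" where
  "rank X le x = height {z\<in>X. le z x} le"

locale finite_poset =
  fixes X :: "'a set" and le :: "'a \<Rightarrow> 'a \<Rightarrow> bool"
  assumes finite: "finite X" and poset: "poset_on X le"
begin

lemma refl: "x \<in> X \<Longrightarrow> le x x"
  using poset unfolding poset_on_def by blast

lemma antisym: "x \<in> X \<Longrightarrow> y \<in> X \<Longrightarrow> le x y \<Longrightarrow> le y x \<Longrightarrow> x = y"
  using poset unfolding poset_on_def by blast

lemma trans: "x \<in> X \<Longrightarrow> y \<in> X \<Longrightarrow> z \<in> X \<Longrightarrow> le x y \<Longrightarrow> le y z \<Longrightarrow> le x z"
  using poset unfolding poset_on_def by blast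

lemma dual: "finite_poset X (\<lambda>x y. le y x)"
  using finite poset unfolding finite_poset_def poset_on_def by blast

abbreviation "\<rho> \<equiv> rank X le"
abbreviation "\<delta> \<equiv> rank X (\<lambda>x y. le y x)"
abbreviation "h \<equiv> height X le"

lemma greatest_in_chain:
  assumes "finite C" "C \<noteq> {}" "C \<subseteq> X" "chain_in C le"
  obtains z where "z \<in> C" "\<forall>w\<in>C. le w z"
  using assms
proof (induction C arbitrary: thesis rule: finite_ne_induct)
  case (singleton x)
  then show ?case using refl by auto
next
  case (insert x F)
  obtain z where z: "z \<in> F" "\<forall>w\<in>F. le w z"
    using insert.IH insert.prems chain_in_subset[of "insert x F" le F] by blast
  have "le x z \<or> le z x"
    using insert.prems z(1) unfolding chain_in_def by auto
  then show ?case
    using insert.prems z refl trans[of _ z x] by (metis insert_iff subset_eq)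
qed

lemma card_chain_le_rank:
  "C \<subseteq> X \<Longrightarrow> chain_in C le \<Longrightarrow> \<forall>w\<in>C. le w x \<Longrightarrow> card C \<le> \<rho> x"
  unfolding rank_def by (rule card_le_height) (use finite in auto)

lemma rank_attained:
  obtains C where "C \<subseteq> X" "chain_in C le" "\<forall>w\<in>C. le w x" "card C = \<rho> x"
proof -
  have "finite {z\<in>X. le z x}" using finite by simp
  then obtain C where "C \<subseteq> {z\<in>X. le z x}" "chain_in C le" "card C = height {z\<in>X. le z x} le"
    by (rule height_attained)
  then show ?thesis by (intro that) (auto simp: rank_def)
qed

lemma rank_pos: "x \<in> X \<Longrightarrow> 1 \<le> \<rho> x"
  using card_chain_le_rank[of "{x}" x] refl by (auto simp: chain_in_def)

lemma rank_le_height: "\<rho> x \<le> h"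
  by (metis card_le_height finite rank_attained)

lemma rank_less:
  assumes "x \<in> X" "y \<in> X" "le x y" "x \<noteq> y"
  shows "\<rho> x < \<rho> y"
proof -
  obtain C where C: "C \<subseteq> X" "chain_in C le" "\<forall>w\<in>C. le w x" "card C = \<rho> x"
    by (rule rank_attained)
  have "y \<notin> C" using C assms antisym by blast
  have below_y: "\<forall>w\<in>insert y C. le w y"
    using C assms refl trans[of _ x y] by blast
  then have "chain_in (insert y C) le"
    using C(2) unfolding chain_in_def by auto
  then have "card (insert y C) \<le> \<rho> y"
    using card_chain_le_rank below_y C(1) assms(2) by simp
  moreover have "card (insert y C) = Suc (\<rho> x)"
    using \<open>y \<notin> C\<close> C finite_subset[OF C(1) finite] by simp
  ultimately show ?thesis by simp
qed

lemma rank_mono: "x \<in> X \<Longrightarrow> y \<in> X \<Longrightarrow> le x y \<Longrightarrow> \<rho> x \<le> \<rho> y"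
  using rank_less by fastforce

lemma rank_inj_on_chain: "C \<subseteq> X \<Longrightarrow> chain_in C le \<Longrightarrow> inj_on \<rho> C"
  unfolding chain_in_def inj_on_def by (metis less_irrefl rank_less subsetD)

text \<open>The second-largest element of a longest chain ending at \<open>x\<close> is a predecessor of rank one less.\<close>
lemma rank_predecessor:
  assumes "x \<in> X" "2 \<le> \<rho> x"
  obtains z where "z \<in> X" "le z x" "z \<noteq> x" "\<rho> z + 1 = \<rho> x"
proof -
  obtain C where C: "C \<subseteq> X" "chain_in C le" "\<forall>w\<in>C. le w x" "card C = \<rho> x"
    by (rule rank_attained)
  have "finite C" using C(1) finite finite_subset by blast
  let ?C = "C - {x}"
  have card: "\<rho> x - 1 \<le> card ?C" using C \<open>finite C\<close> by (simp add: card_Diff_singleton_if)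
  then have "?C \<noteq> {}" using assms(2) by fastforce
  moreover have chain: "chain_in ?C le" using C(2) chain_in_subset by blast
  ultimately obtain z where z: "z \<in> ?C" "\<forall>w\<in>?C. le w z"
    using greatest_in_chain[of ?C] \<open>finite C\<close> C(1) by blast
  have "card ?C \<le> \<rho> z" using card_chain_le_rank[of ?C z] C(1) chain z by auto
  moreover have "\<rho> z < \<rho> x" using rank_less[of z x] z C assms(1) by auto
  ultimately show ?thesis using that[of z] card z C by auto
qed

lemma rank_add_corank_le:
  assumes "a \<in> X" "b \<in> X" "le b a"
  shows "\<rho> b + \<delta> a \<le> h + 1" and "b \<noteq> a \<Longrightarrow> \<rho> b + \<delta> a \<le> h"
proof -
  interpret dual: finite_poset X "\<lambda>x y. le y x" by (rule dual)
  obtain C1 where C1: "C1 \<subseteq> X" "chain_in C1 le" "\<forall>w\<in>C1. le w b" "card C1 = \<rho> b"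
    by (rule rank_attained)
  obtain C2 where C2: "C2 \<subseteq> X" "chain_in C2 (\<lambda>x y. le y x)" "\<forall>w\<in>C2. le a w" "card C2 = \<delta> a"
    by (rule dual.rank_attained)
  note C2(2)[unfolded chain_in_converse[of _ le]]
  have "finite C1" "finite C2" using C1(1) C2(1) finite finite_subset by auto
  have "\<forall>u\<in>C1. \<forall>v\<in>C2. le u v"
    using C1 C2 assms trans by (meson subsetD)
  then have "chain_in (C1 \<union> C2) le"
    using C1(2) \<open>chain_in C2 le\<close> unfolding chain_in_def by blast
  then have union: "card (C1 \<union> C2) \<le> h"
    using card_le_height[OF finite] C1(1) C2(1) by simp
  have "z = a \<and> a = b" if "z \<in> C1" "z \<in> C2" for z
    using that C1 C2 assms antisym trans by (meson subsetD)
  then have inter: "C1 \<inter> C2 \<subseteq> {a}" "b \<noteq> a \<Longrightarrow> C1 \<inter> C2 = {}" by auto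
  have sum: "card C1 + card C2 = card (C1 \<union> C2) + card (C1 \<inter> C2)"
    using card_Un_Int \<open>finite C1\<close> \<open>finite C2\<close> by blast
  have "card (C1 \<inter> C2) \<le> 1" using card_mono[OF _ inter(1)] by simp
  then show "\<rho> b + \<delta> a \<le> h + 1" using sum union C1(4) C2(4) by linarith
  show "b \<noteq> a \<Longrightarrow> \<rho> b + \<delta> a \<le> h" using sum union inter(2) C1(4) C2(4) by simp
qed

text \<open>Descending along predecessors keeps \<open>\<rho> + \<delta>\<close> from decreasing, since \<open>\<delta>\<close> grows at each step.\<close>
lemma chain_below_rank:
  assumes "y \<in> X" "n \<le> \<rho> y"
  shows "\<exists>B. B \<subseteq> X \<and> chain_in B le \<and> card B = n \<and>
           (\<forall>b\<in>B. le b y \<and> \<rho> y < \<rho> b + n \<and> \<rho> y + \<delta> y \<le> \<rho> b + \<delta> b)"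
  using assms
proof (induction n arbitrary: y)
  case 0
  show ?case by (intro exI[of _ "{}"]) (simp add: chain_in_def)
next
  case (Suc n)
  interpret dual: finite_poset X "\<lambda>x y. le y x" by (rule dual)
  show ?case
  proof (cases "n = 0")
    case True
    then show ?thesis using Suc.prems refl by (auto simp: chain_in_def intro!: exI[of _ "{y}"])
  next
    case False
    then have "2 \<le> \<rho> y" using Suc.prems(2) by linarith
    then obtain z where z: "z \<in> X" "le z y" "z \<noteq> y" "\<rho> z + 1 = \<rho> y"
      using rank_predecessor Suc.prems(1) by blast
    have "\<delta> y < \<delta> z" using dual.rank_less[of y z] z Suc.prems(1) by auto
    have "n \<le> \<rho> z" using Suc.prems(2) z(4) by linarith
    then obtain B where B: "B \<subseteq> X" "chain_in B le" "card B = n"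
        "\<forall>b\<in>B. le b z \<and> \<rho> z < \<rho> b + n \<and> \<rho> z + \<delta> z \<le> \<rho> b + \<delta> b"
      using Suc.IH z(1) by blast
    have below: "\<forall>b\<in>insert y B. le b y"
      using B z Suc.prems(1) refl trans[of _ z y] by blast
    have "y \<notin> B" using B z Suc.prems(1) antisym by blast
    then have "card (insert y B) = Suc n" using B(1,3) finite finite_subset by fastforce
    moreover have "chain_in (insert y B) le"
      using B(2) below unfolding chain_in_def by auto
    moreover have "\<forall>b\<in>insert y B. \<rho> y < \<rho> b + Suc n \<and> \<rho> y + \<delta> y \<le> \<rho> b + \<delta> b"
    proof
      fix b assume "b \<in> insert y B"
      then show "\<rho> y < \<rho> b + Suc n \<and> \<rho> y + \<delta> y \<le> \<rho> b + \<delta> b"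
        using B(4) z(4) \<open>\<delta> y < \<delta> z\<close> by (cases "b = y") auto
    qed
    ultimately show ?thesis using below B(1) Suc.prems(1) by (intro exI[of _ "insert y B"]) simp
  qed
qed

lemma top_of_longest_chain:
  assumes "1 \<le> h"
  obtains t where "t \<in> X" "\<rho> t = h" "\<rho> t + \<delta> t = h + 1"
proof -
  interpret dual: finite_poset X "\<lambda>x y. le y x" by (rule dual)
  obtain T where T: "T \<subseteq> X" "chain_in T le" "card T = h"
    using height_attained[OF finite] by blast
  have "finite T" using T(1) finite finite_subset by blast
  moreover have "T \<noteq> {}" using T(3) assms by auto
  ultimately obtain t where t: "t \<in> T" "\<forall>w\<in>T. le w t"
    using greatest_in_chain T by blast
  have "t \<in> X" using t T by auto
  have "h \<le> \<rho> t" using card_chain_le_rank[of T t] T t by simp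
  moreover have "1 \<le> \<delta> t" using dual.rank_pos \<open>t \<in> X\<close> by simp
  moreover have "\<rho> t + \<delta> t \<le> h + 1" using rank_add_corank_le(1) \<open>t \<in> X\<close> refl by blast
  ultimately show ?thesis using that \<open>t \<in> X\<close> rank_le_height[of t] by simp
qed

lemma element_on_longest_chain:
  assumes "1 \<le> j" "j \<le> h"
  shows "\<exists>c\<in>X. \<rho> c = j \<and> \<rho> c + \<delta> c = h + 1"
  using assms(2)
proof (induction j rule: inc_induct)
  case base
  show ?case using top_of_longest_chain assms by (metis order.trans)
next
  case (step n)
  interpret dual: finite_poset X "\<lambda>x y. le y x" by (rule dual)
  obtain c where c: "c \<in> X" "\<rho> c = Suc n" "\<rho> c + \<delta> c = h + 1" using step.IH by blast
  obtain z where z: "z \<in> X" "le z c" "z \<noteq> c" "\<rho> z + 1 = \<rho> c"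
    using rank_predecessor[of c] c step.hyps assms(1) by auto
  have "\<delta> c < \<delta> z" using dual.rank_less[of c z] z c by auto
  moreover have "\<rho> z + \<delta> z \<le> h + 1" using rank_add_corank_le(1) z(1) refl by blast
  ultimately show ?case using z c by (intro bexI[of _ z]) auto
qed

end

section \<open>Bands\<close>

context finite_poset
begin

lemma incomparable_chains_absent:
  assumes "excludes_kk X le k" "A \<subseteq> X" "B \<subseteq> X" "card A = k" "card B = k"
    "chain_in A le" "chain_in B le" "\<forall>a\<in>A. \<forall>b\<in>B. incomparable le a b"
  shows False
proof -
  have "A \<inter> B = {}" using assms(2,8) refl unfolding incomparable_def by blast
  then show False using assms unfolding excludes_kk_def by blast
qed

lemma incomparable_rank_corank_bound:
  assumes "excludes_kk X le k" "x \<in> X" "y \<in> X" "incomparable le x y"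
  shows "\<rho> y + \<delta> x + 2 \<le> h + 2 * k"
proof (rule ccontr)
  interpret dual: finite_poset X "\<lambda>x y. le y x" by (rule dual)
  assume big: "\<not> \<rho> y + \<delta> x + 2 \<le> h + 2 * k"
  have "\<rho> y \<le> h" "\<delta> x \<le> h"
    using rank_le_height dual.rank_le_height[of x] height_converse[of X le] by auto
  then have "k \<le> \<rho> y" "k \<le> \<delta> x" using big by linarith+
  obtain B where B: "B \<subseteq> X" "chain_in B le" "card B = k" "\<forall>b\<in>B. le b y \<and> \<rho> y < \<rho> b + k"
    using chain_below_rank[OF assms(3) \<open>k \<le> \<rho> y\<close>] by blast
  obtain A where A: "A \<subseteq> X" "chain_in A (\<lambda>x y. le y x)" "card A = k" "\<forall>a\<in>A. le x a \<and> \<delta> x < \<delta> a + k"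
    using dual.chain_below_rank[OF assms(2) \<open>k \<le> \<delta> x\<close>] by blast
  have "incomparable le b a" if "b \<in> B" "a \<in> A" for b a
  proof -
    have "a \<in> X" "b \<in> X" "le x a" "le b y" using that A B by auto
    then have "\<not> le a b" using assms(2-4) trans unfolding incomparable_def by metis
    moreover have "\<not> le b a"
    proof
      assume "le b a"
      then have "b \<noteq> a" using \<open>\<not> le a b\<close> by blast
      then have "\<rho> b + \<delta> a \<le> h" using rank_add_corank_le(2) \<open>a \<in> X\<close> \<open>b \<in> X\<close> \<open>le b a\<close> by blast
      then show False using A(4) B(4) that big by fastforce
    qed
    ultimately show ?thesis unfolding incomparable_def by blast
  qed
  then show False
    using incomparable_chains_absent[OF assms(1) B(1) A(1) B(3) A(3) B(2)] A(2)
    unfolding chain_in_converse[of _ le] by blast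
qed

lemma card_chain_rank_window:
  assumes "C \<subseteq> X" "chain_in C le"
  shows "card {c\<in>C. a < \<rho> c + m \<and> \<rho> c \<le> a} \<le> m"
proof -
  let ?W = "{c\<in>C. a < \<rho> c + m \<and> \<rho> c \<le> a}"
  have "inj_on (\<lambda>c. a - \<rho> c) ?W"
    using rank_inj_on_chain[OF assms] unfolding inj_on_def by fastforce
  moreover have "(\<lambda>c. a - \<rho> c) ` ?W \<subseteq> {..<m}" by auto
  ultimately show ?thesis using card_inj_on_le[of _ ?W "{..<m}"] by simp
qed

lemma tight_chain_below_rank:
  assumes "1 \<le> k" "k \<le> j" "j \<le> h"
  shows "\<exists>B. B \<subseteq> X \<and> chain_in B le \<and> card B = k \<and>
           (\<forall>b\<in>B. \<rho> b + \<delta> b = h + 1 \<and> j < \<rho> b + k \<and> \<rho> b \<le> j)"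
proof -
  obtain c where c: "c \<in> X" "\<rho> c = j" "\<rho> c + \<delta> c = h + 1"
    using element_on_longest_chain assms by (metis order.trans)
  obtain B where B: "B \<subseteq> X" "chain_in B le" "card B = k"
      "\<forall>b\<in>B. le b c \<and> \<rho> c < \<rho> b + k \<and> \<rho> c + \<delta> c \<le> \<rho> b + \<delta> b"
    using chain_below_rank[OF c(1)] c(2) assms(2) by blast
  have "\<rho> b + \<delta> b = h + 1 \<and> j < \<rho> b + k \<and> \<rho> b \<le> j" if "b \<in> B" for b
    using that B c rank_mono[of b c] rank_add_corank_le(1)[of b b] refl by fastforce
  then show ?thesis using B by blast
qed

definition band :: "nat \<Rightarrow> nat \<Rightarrow> 'a set" where
  "band k i = {x\<in>X. \<delta> x + i \<le> h + 1 \<and> \<rho> x + 3 \<le> i + 2 * k}"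

lemma band_subset: "band k i \<subseteq> X"
  unfolding band_def by blast

lemma band_convex: "convex_in X le (band k i)"
proof -
  interpret dual: finite_poset X "\<lambda>x y. le y x" by (rule dual)
  have "y \<in> band k i" if "x \<in> band k i" "z \<in> band k i" "y \<in> X" "le x y" "le y z" for x y z
    using that dual.rank_mono[of y x] rank_mono[of y z] unfolding band_def by fastforce
  then show ?thesis unfolding convex_in_def using band_subset by blast
qed

lemma band_covers_incomparable:
  assumes "2 \<le> k" "excludes_kk X le k" "x \<in> X" "y \<in> X" "incomparable le x y"
  shows "\<exists>i\<le>h. x \<in> band k i \<and> y \<in> band k i"
proof -
  interpret dual: finite_poset X "\<lambda>x y. le y x" by (rule dual)
  have covers: "\<exists>i\<le>h. x \<in> band k i \<and> y \<in> band k i"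
    if "x \<in> X" "y \<in> X" "incomparable le x y" "\<delta> y \<le> \<delta> x" for x y
  proof -
    have "\<rho> y + \<delta> x + 2 \<le> h + 2 * k"
      using incomparable_rank_corank_bound[OF assms(2)] that by blast
    moreover have "\<rho> x + \<delta> x \<le> h + 1" "1 \<le> \<delta> x"
      using rank_add_corank_le(1) refl dual.rank_pos that(1) by auto
    ultimately have "x \<in> band k (h + 1 - \<delta> x)" "y \<in> band k (h + 1 - \<delta> x)"
      using that assms(1) unfolding band_def by auto
    moreover have "h + 1 - \<delta> x \<le> h" using \<open>1 \<le> \<delta> x\<close> by simp
    ultimately show ?thesis by blast
  qed
  have "incomparable le y x" using assms(5) unfolding incomparable_def by blast
  then show ?thesis using covers assms(3-5) by (metis nat_le_linear)
qed

lemma band_chain_low_corank: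
  assumes "2 \<le> k" "Y \<subseteq> band k i" "chain_in Y le" "4 * k - 4 < card Y"
  shows "\<exists>Z\<subseteq>Y. card Z = k \<and> (\<forall>z\<in>Z. \<delta> z + i + 3 * k \<le> h + 5)"
proof -
  interpret dual: finite_poset X "\<lambda>x y. le y x" by (rule dual)
  let ?a = "h + 1 - i" and ?m = "3 * k - 4"
  let ?High = "{y\<in>Y. ?a < \<delta> y + ?m \<and> \<delta> y \<le> ?a}"
  have "Y \<subseteq> X" using assms(2) band_subset by blast
  then have "finite Y" using finite finite_subset by blast
  have "card ?High \<le> ?m"
    using dual.card_chain_rank_window[OF \<open>Y \<subseteq> X\<close>] assms(3) chain_in_converse[of _ le] by simp
  moreover have "card (Y - ?High) = card Y - card ?High"
    using \<open>finite Y\<close> by (intro card_Diff_subset) auto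
  ultimately have "k \<le> card (Y - ?High)" using assms(1,4) by linarith
  then obtain Z where Z: "Z \<subseteq> Y - ?High" "card Z = k" by (meson obtain_subset_with_card_n)
  have "\<delta> z + i + 3 * k \<le> h + 5" if "z \<in> Z" for z
  proof -
    have "z \<in> Y" "\<not> (?a < \<delta> z + ?m \<and> \<delta> z \<le> ?a)" using that Z(1) by auto
    moreover have "\<delta> z + i \<le> h + 1" using \<open>z \<in> Y\<close> assms(2) unfolding band_def by auto
    ultimately show ?thesis using assms(1) by linarith
  qed
  then show ?thesis using Z by blast
qed

text \<open>A long chain in a band has \<open>k\<close> elements of low corank; the elements of a longest chain
  whose rank lies just above the band form a \<open>k\<close>-chain incomparable to them.\<close>
lemma band_height:
  assumes "2 \<le> k" "excludes_kk X le k"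
  shows "height (band k i) le \<le> 4 * k - 4"
proof (rule height_leI)
  interpret dual: finite_poset X "\<lambda>x y. le y x" by (rule dual)
  show "finite (band k i)" using band_subset finite finite_subset by blast
  fix Y assume Y: "Y \<subseteq> band k i" "chain_in Y le"
  show "card Y \<le> 4 * k - 4"
  proof (rule ccontr)
    assume "\<not> card Y \<le> 4 * k - 4"
    then obtain Z where Z: "Z \<subseteq> Y" "card Z = k" "\<forall>z\<in>Z. \<delta> z + i + 3 * k \<le> h + 5"
      using band_chain_low_corank[OF assms(1) Y] by auto
    have "Z \<subseteq> X" using Z(1) Y(1) band_subset by blast
    have "Z \<noteq> {}" using Z(2) assms(1) by auto
    then obtain z0 where "z0 \<in> Z" by blast
    then have "i + 3 * k \<le> h + 4" using Z(3) dual.rank_pos[of z0] \<open>Z \<subseteq> X\<close> by fastforce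
    then have "1 \<le> k" "k \<le> i + 3 * k - 4" "i + 3 * k - 4 \<le> h" using assms(1) by linarith+
    then obtain B where B: "B \<subseteq> X" "chain_in B le" "card B = k"
        "\<forall>b\<in>B. \<rho> b + \<delta> b = h + 1 \<and> i + 3 * k - 4 < \<rho> b + k \<and> \<rho> b \<le> i + 3 * k - 4"
      using tight_chain_below_rank by blast
    have "incomparable le z b" if "z \<in> Z" "b \<in> B" for z b
    proof -
      have z: "z \<in> X" "\<rho> z + 3 \<le> i + 2 * k" "\<delta> z + i + 3 * k \<le> h + 5"
        using that Z Y(1) unfolding band_def by auto
      have b: "b \<in> X" "\<rho> b + \<delta> b = h + 1" "i + 3 * k < \<rho> b + k + 4" "\<rho> b + 4 \<le> i + 3 * k"
        using that B assms(1) by auto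
      have "z \<noteq> b" using z b assms(1) by auto
      then have "\<not> le z b" "\<not> le b z"
        using rank_less[of b z] dual.rank_less[of b z] z b assms(1) by fastforce+
      then show ?thesis unfolding incomparable_def by blast
    qed
    then show False
      using incomparable_chains_absent[OF assms(2) \<open>Z \<subseteq> X\<close> B(1) Z(2) B(3)] Z(1) Y(2) B(2)
        chain_in_subset by blast
  qed
qed

end

section \<open>Linear extensions and dimension\<close>

lemma dim_le_realizer: "realizer X le t L \<Longrightarrow> 1 \<le> t \<Longrightarrow> dim X le \<le> t"
  unfolding dim_def by (rule Least_le) blast

lemma realizer_pad:
  assumes "realizer X le t L" "1 \<le> t" "t \<le> s"
  shows "realizer X le s (\<lambda>i. L (if i < t then i else 0))"
proof -
  let ?L = "\<lambda>i. L (if i < t then i else 0)"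
  have lin: "\<forall>i<t. linear_extension X le (L i)" and real: "\<forall>x\<in>X. \<forall>y\<in>X. le x y \<longleftrightarrow> (\<forall>i<t. L i x y)"
    using assms(1) unfolding realizer_def by blast+
  have "\<forall>i<s. linear_extension X le (?L i)" using lin assms(2) by simp
  moreover have same: "(\<forall>i<s. ?L i x y) \<longleftrightarrow> (\<forall>i<t. L i x y)" for x y
  proof
    assume all: "\<forall>i<s. ?L i x y"
    show "\<forall>i<t. L i x y"
    proof (intro allI impI)
      fix i assume "i < t"
      then show "L i x y" using all[rule_format, of i] assms(3) by simp
    qed
  next
    assume "\<forall>i<t. L i x y"
    then show "\<forall>i<s. ?L i x y" using assms(2) by simp
  qed
  ultimately show ?thesis using real unfolding realizer_def same by blast
qed

context finite_poset
begin

text \<open>Sorting by rank, with ties broken by an injection into \<open>\<nat>\<close>, is a linear extension.\<close>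
lemma linear_extension_exists: "\<exists>E. linear_extension X le E"
proof -
  obtain f :: "'a \<Rightarrow> nat" and n where "inj_on f X"
    using finite_imp_inj_to_nat_seg[OF finite] by blast
  define E where "E x y \<longleftrightarrow> \<rho> x < \<rho> y \<or> (\<rho> x = \<rho> y \<and> f x \<le> f y)" for x y
  have "poset_on X E"
    unfolding poset_on_def E_def using \<open>inj_on f X\<close> by (auto dest: inj_onD)
  moreover have "\<forall>x\<in>X. \<forall>y\<in>X. le x y \<longrightarrow> E x y"
    unfolding E_def using rank_less by fastforce
  ultimately show ?thesis unfolding linear_extension_def E_def by auto
qed

lemma poset_on_glued:
  assumes "Q \<subseteq> X" "poset_on Q L" "\<forall>x\<in>Q. \<forall>y\<in>Q. le x y \<longrightarrow> L x y"
  shows "poset_on X (\<lambda>x y. le x y \<or> (\<exists>a\<in>Q. \<exists>b\<in>Q. le x a \<and> L a b \<and> le b y))"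
    (is "poset_on X ?R")
proof -
  have Q: "a \<in> Q \<Longrightarrow> a \<in> X" for a using assms(1) by blast
  have Lantisym: "a \<in> Q \<Longrightarrow> b \<in> Q \<Longrightarrow> L a b \<Longrightarrow> L b a \<Longrightarrow> a = b" for a b
    using assms(2) unfolding poset_on_def by blast
  have Ltrans: "a \<in> Q \<Longrightarrow> b \<in> Q \<Longrightarrow> c \<in> Q \<Longrightarrow> L a b \<Longrightarrow> L b c \<Longrightarrow> L a c" for a b c
    using assms(2) unfolding poset_on_def by blast
  have L_through: "L b a" if "a \<in> Q" "b \<in> Q" "y \<in> X" "le b y" "le y a" for a b y
    using that assms(3) Q trans by blast
  have antisym_R: "x = y" if "x \<in> X" "y \<in> X" and xy: "?R x y" and yx: "?R y x" for x y
  proof -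
    consider "le x y" "le y x"
      | a b where "a \<in> Q" "b \<in> Q" "le x a" "L a b" "le b y" "le y x"
      | a b where "a \<in> Q" "b \<in> Q" "le y a" "L a b" "le b x" "le x y"
      | a b a' b' where "a \<in> Q" "b \<in> Q" "le x a" "L a b" "le b y"
          "a' \<in> Q" "b' \<in> Q" "le y a'" "L a' b'" "le b' x"
      using xy yx by blast
    then show ?thesis
    proof cases
      case 1 then show ?thesis using that antisym by blast
    next
      case 2 then show ?thesis using that L_through[of a b x] L_through[of a b y] Lantisym antisym trans Q by metis
    next
      case 3 then show ?thesis using that L_through[of a b x] L_through[of a b y] Lantisym antisym trans Q by metis
    next
      case 4
      have "L b a'" "L b' a" using L_through[of a' b y] L_through[of a b' x] 4 that by blast+
      then have "L a a'" "L a' a" using Ltrans[of a b a'] Ltrans[of a' b' a] 4 by blast+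
      then have "a = a'" using Lantisym 4 by blast
      then have "a = b" "a' = b'" using Lantisym \<open>L b a'\<close> \<open>L b' a\<close> 4 by blast+
      then have "le x y" "le y x" using trans[of x a y] trans[of y a' x] 4 that Q by blast+
      then show ?thesis using that antisym by blast
    qed
  qed
  have trans_R: "?R x z" if "x \<in> X" "y \<in> X" "z \<in> X" and xy: "?R x y" and yz: "?R y z" for x y z
  proof -
    consider "le x y" "le y z"
      | a b where "a \<in> Q" "b \<in> Q" "le x y" "le y a" "L a b" "le b z"
      | a b where "a \<in> Q" "b \<in> Q" "le x a" "L a b" "le b y" "le y z"
      | a b a' b' where "a \<in> Q" "b \<in> Q" "le x a" "L a b" "le b y"
          "a' \<in> Q" "b' \<in> Q" "le y a'" "L a' b'" "le b' z"
      using xy yz by blast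
    then show ?thesis
    proof cases
      case 1 then show ?thesis using that trans by blast
    next
      case 2 then show ?thesis using that trans Q by blast
    next
      case 3 then show ?thesis using that trans Q by blast
    next
      case 4
      have "L b a'" using L_through[of a' b y] 4 that by blast
      then have "L a b'" using Ltrans[of a b a'] Ltrans[of a a' b'] 4 by blast
      then show ?thesis using 4 by blast
    qed
  qed
  show ?thesis
    unfolding poset_on_def
  proof (intro conjI ballI impI)
    fix x assume "x \<in> X"
    then show "?R x x" using refl by blast
  next
    fix x y assume "x \<in> X" "y \<in> X" "?R x y \<and> ?R y x"
    then show "x = y" using antisym_R by blast
  next
    fix x y z assume "x \<in> X" "y \<in> X" "z \<in> X" "?R x y \<and> ?R y z"
    then show "?R x z" using trans_R by blast
  qed
qed

lemma linear_extension_extends: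
  assumes "Q \<subseteq> X" "linear_extension Q le L"
  shows "\<exists>E. linear_extension X le E \<and> (\<forall>x\<in>Q. \<forall>y\<in>Q. E x y = L x y)"
proof -
  have L: "poset_on Q L" "\<forall>x\<in>Q. \<forall>y\<in>Q. L x y \<or> L y x" "\<forall>x\<in>Q. \<forall>y\<in>Q. le x y \<longrightarrow> L x y"
    using assms(2) unfolding linear_extension_def by auto
  define R where "R x y \<longleftrightarrow> le x y \<or> (\<exists>a\<in>Q. \<exists>b\<in>Q. le x a \<and> L a b \<and> le b y)" for x y
  have "poset_on X R" unfolding R_def by (rule poset_on_glued[OF assms(1) L(1,3)])
  then interpret R: finite_poset X R by (simp add: finite_poset_def finite)
  obtain E where "linear_extension X R E" using R.linear_extension_exists by blast
  then have E: "poset_on X E" "\<forall>x\<in>X. \<forall>y\<in>X. E x y \<or> E y x" "\<forall>x\<in>X. \<forall>y\<in>X. R x y \<longrightarrow> E x y"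
    unfolding linear_extension_def by auto
  have "linear_extension X le E" using E unfolding linear_extension_def R_def by simp
  moreover have L_E: "E x y" if "x \<in> Q" "y \<in> Q" "L x y" for x y
    using that assms(1) E(3) refl unfolding R_def by blast
  moreover have "L x y" if "x \<in> Q" "y \<in> Q" "E x y" for x y
  proof (rule ccontr)
    assume "\<not> L x y"
    then have "E y x" using L(2) L_E that by blast
    then have "x = y" using E(1) that assms(1) unfolding poset_on_def by blast
    then show False using \<open>\<not> L x y\<close> L(1) that unfolding poset_on_def by blast
  qed
  ultimately show ?thesis by blast
qed

lemma subposet:
  assumes "Q \<subseteq> X"
  shows "finite_poset Q le"
proof (rule finite_poset.intro)
  show "finite Q" using assms finite finite_subset by blast
  show "poset_on Q le" using assms poset unfolding poset_on_def by blast
qed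

lemma linear_extension_reversing:
  assumes "x \<in> X" "y \<in> X" "\<not> le x y"
  shows "\<exists>E. linear_extension X le E \<and> \<not> E x y"
proof -
  have "x \<noteq> y" using assms refl by blast
  define L where "L a b \<longleftrightarrow> a = b \<or> (a = y \<and> b = x)" for a b
  have "linear_extension {x, y} le L"
    unfolding linear_extension_def poset_on_def L_def using \<open>x \<noteq> y\<close> assms(3) by auto
  then obtain E where "linear_extension X le E" "\<forall>a\<in>{x, y}. \<forall>b\<in>{x, y}. E a b = L a b"
    using linear_extension_extends[of "{x, y}"] assms(1,2) by auto
  then show ?thesis using \<open>x \<noteq> y\<close> unfolding L_def by auto
qed

lemma realizer_exists: "\<exists>t L. 1 \<le> t \<and> realizer X le t L"
proof -
  have "finite {(x, y). x \<in> X \<and> y \<in> X \<and> \<not> le x y}"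
    by (rule finite_subset[of _ "X \<times> X"]) (use finite in auto)
  then obtain ps where ps: "set ps = {(x, y). x \<in> X \<and> y \<in> X \<and> \<not> le x y}"
    using finite_list by blast
  have "\<forall>p\<in>set ps. \<exists>E. linear_extension X le E \<and> \<not> E (fst p) (snd p)"
    using linear_extension_reversing ps by auto
  from bchoice[OF this] obtain Rev
    where Rev: "\<forall>p\<in>set ps. linear_extension X le (Rev p) \<and> \<not> Rev p (fst p) (snd p)"
    by blast
  obtain E0 where E0: "linear_extension X le E0" using linear_extension_exists by blast
  define L where "L i = (if i < length ps then Rev (ps ! i) else E0)" for i
  have lin: "linear_extension X le (L i)" for i
    unfolding L_def using Rev E0 nth_mem by auto
  have respects: "L i x y" if "x \<in> X" "y \<in> X" "le x y" for i x y
    using lin that unfolding linear_extension_def by blast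
  have reflects: "le x y" if "x \<in> X" "y \<in> X" "\<forall>i<length ps + 1. L i x y" for x y
  proof (rule ccontr)
    assume "\<not> le x y"
    then have "(x, y) \<in> set ps" using that(1,2) ps by blast
    then obtain i where "i < length ps" "ps ! i = (x, y)" by (metis in_set_conv_nth)
    then have "L i = Rev (x, y)" unfolding L_def by simp
    moreover have "\<not> Rev (x, y) x y" using Rev \<open>(x, y) \<in> set ps\<close> by auto
    ultimately show False using that(3)[rule_format, of i] \<open>i < length ps\<close> by simp
  qed
  have "realizer X le (length ps + 1) L"
    unfolding realizer_def using lin respects reflects by blast
  then show ?thesis by (intro exI[of _ "length ps + 1"] exI[of _ L]) simp
qed

lemma dim_realizer: "1 \<le> dim X le \<and> (\<exists>L. realizer X le (dim X le) L)"
proof -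
  have "\<exists>t. 1 \<le> t \<and> (\<exists>L. realizer X le t L)" using realizer_exists by blast
  then show ?thesis unfolding dim_def by (rule LeastI_ex)
qed

lemma extended_realizer:
  assumes "Q \<subseteq> X" "dim Q le \<le> d"
  shows "\<exists>F. (\<forall>j<d. linear_extension X le (F j)) \<and> (\<forall>x\<in>Q. \<forall>y\<in>Q. \<not> le x y \<longrightarrow> (\<exists>j<d. \<not> F j x y))"
proof -
  interpret Q: finite_poset Q le using subposet[OF assms(1)] .
  obtain R where "realizer Q le (dim Q le) R" "1 \<le> dim Q le" using Q.dim_realizer by blast
  then obtain R where "realizer Q le d R" using realizer_pad assms(2) by blast
  then have R: "\<forall>j<d. linear_extension Q le (R j)" "\<forall>x\<in>Q. \<forall>y\<in>Q. le x y \<longleftrightarrow> (\<forall>j<d. R j x y)"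
    unfolding realizer_def by blast+
  have "\<forall>j\<in>{..<d}. \<exists>E. linear_extension X le E \<and> (\<forall>x\<in>Q. \<forall>y\<in>Q. E x y = R j x y)"
    using linear_extension_extends[OF assms(1)] R(1) by blast
  from bchoice[OF this] obtain F
    where F: "\<forall>j\<in>{..<d}. linear_extension X le (F j) \<and> (\<forall>x\<in>Q. \<forall>y\<in>Q. F j x y = R j x y)"
    by blast
  have "\<exists>j<d. \<not> F j x y" if xy: "x \<in> Q" "y \<in> Q" "\<not> le x y" for x y
  proof -
    obtain j where "j < d" "\<not> R j x y" using R(2) xy by blast
    then show ?thesis using F xy(1,2) by auto
  qed
  then show ?thesis using F by blast
qed

lemma dim_le_cover:
  assumes "\<And>i. i \<le> m \<Longrightarrow> Q i \<subseteq> X" "\<And>i. i \<le> m \<Longrightarrow> dim (Q i) le \<le> d"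
    and "\<And>x y. x \<in> X \<Longrightarrow> y \<in> X \<Longrightarrow> incomparable le x y \<Longrightarrow> \<exists>i\<le>m. x \<in> Q i \<and> y \<in> Q i"
  shows "dim X le \<le> (m + 1) * d"
proof -
  have "1 \<le> dim (Q 0) le" using finite_poset.dim_realizer[OF subposet[OF assms(1)]] by simp
  then have "1 \<le> d" using assms(2)[of 0] by simp
  have "\<forall>i\<in>{..m}. \<exists>F. (\<forall>j<d. linear_extension X le (F j)) \<and>
      (\<forall>x\<in>Q i. \<forall>y\<in>Q i. \<not> le x y \<longrightarrow> (\<exists>j<d. \<not> F j x y))"
  proof
    fix i assume "i \<in> {..m}"
    then show "\<exists>F. (\<forall>j<d. linear_extension X le (F j)) \<and>
        (\<forall>x\<in>Q i. \<forall>y\<in>Q i. \<not> le x y \<longrightarrow> (\<exists>j<d. \<not> F j x y))"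
      by (intro extended_realizer assms(1,2)) simp_all
  qed
  from bchoice[OF this] obtain F where F: "\<forall>i\<in>{..m}. (\<forall>j<d. linear_extension X le (F i j)) \<and>
      (\<forall>x\<in>Q i. \<forall>y\<in>Q i. \<not> le x y \<longrightarrow> (\<exists>j<d. \<not> F i j x y))"
    by blast
  define L where "L n = F (n div d) (n mod d)" for n
  have lin: "linear_extension X le (L n)" if "n < (m + 1) * d" for n
  proof -
    have "n div d \<in> {..m}" using less_mult_imp_div_less[OF that] by simp
    moreover have "n mod d < d" using \<open>1 \<le> d\<close> by simp
    ultimately show ?thesis unfolding L_def using F by blast
  qed
  have respects: "L n x y" if "n < (m + 1) * d" "x \<in> X" "y \<in> X" "le x y" for n x y
    using lin[OF that(1)] that(2-4) unfolding linear_extension_def by blast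
  have reflects: "le x y" if xy: "x \<in> X" "y \<in> X" and all: "\<forall>n<(m + 1) * d. L n x y" for x y
  proof (rule ccontr)
    assume "\<not> le x y"
    show False
    proof (cases "le y x")
      case True
      have "0 < (m + 1) * d" using \<open>1 \<le> d\<close> by simp
      then have "L 0 x y" "L 0 y x" using all respects True xy by blast+
      then have "x = y" using lin[OF \<open>0 < (m + 1) * d\<close>] xy unfolding linear_extension_def poset_on_def by blast
      then show False using \<open>\<not> le x y\<close> refl xy by blast
    next
      case False
      then obtain i where "i \<le> m" "x \<in> Q i" "y \<in> Q i"
        using assms(3) xy \<open>\<not> le x y\<close> unfolding incomparable_def by blast
      then have "\<exists>j<d. \<not> F i j x y" using F \<open>\<not> le x y\<close> by simp
      then obtain j where "j < d" "\<not> F i j x y" by blast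
      have "i * d + j < (i + 1) * d" using \<open>j < d\<close> by simp
      also have "\<dots> \<le> (m + 1) * d" using \<open>i \<le> m\<close> by simp
      finally have "L (i * d + j) x y" using all by blast
      moreover have "L (i * d + j) = F i j" unfolding L_def using \<open>j < d\<close> by simp
      ultimately show False using \<open>\<not> F i j x y\<close> by simp
    qed
  qed
  have "realizer X le ((m + 1) * d) L"
    unfolding realizer_def using lin respects reflects by blast
  moreover have "1 \<le> (m + 1) * d" using \<open>1 \<le> d\<close> by simp
  ultimately show ?thesis by (rule dim_le_realizer)
qed

end

theorem proposition8:
  fixes X :: "'a set" and le :: "'a \<Rightarrow> 'a \<Rightarrow> bool" and k d1 :: nat
  assumes "k \<ge> 2"
    and "finite X"
    and "poset_on X le"
    and "excludes_kk X le k"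
    and "\<forall>Q. convex_in X le Q \<and> height Q le \<le> 4 * k - 4 \<longrightarrow> dim Q le \<le> d1"
  shows "dim X le \<le> (height X le + 1) * d1"
proof -
  interpret finite_poset X le using assms(2,3) by (rule finite_poset.intro)
  have "dim (band k i) le \<le> d1" for i
    using assms(5) band_convex band_height[OF assms(1,4)] by blast
  moreover have "\<exists>i\<le>height X le. x \<in> band k i \<and> y \<in> band k i"
    if "x \<in> X" "y \<in> X" "incomparable le x y" for x y
    using band_covers_incomparable[OF assms(1,4) that] .
  ultimately show ?thesis using dim_le_cover[of "height X le" "band k"] band_subset by blast
qed

end
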